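(* Let $n_1,n_2,n_3$ be pairwise coprime positive integers forming a minimal system of generators of $\mathcal S=\langle n_1,n_2,n_3\rangle$. Then for every $\{i,j,k\}=\{1,2,3\}$, $$c_k=\min_{\alpha=1,\dots,I_k}\left\{\alpha n_j-[-n_in_k^{-1}]_{n_j}\left\lfloor \frac{\alpha n_k}{[n_in_j^{-1}]_{n_k}}\right\rfloor\right\},\qquad I_k=\left\lceil [-n_in_k^{-1}]_{n_j}\,\frac{[n_in_j^{-1}]_{n_k}}{n_i}\right\rceil .$$
   Context: $\mathbb N$ denotes the nonnegative integers. For integers $a_1,\dots,a_r$, $\langle a_1,\dots,a_r\rangle=\{\sum t_la_l: t_l\in\mathbb N\}$. Minimal system of generators means that no $n_l$ belongs to the monoid generated by the other two. For an integer $m$ and $n\ge 1$, $[m]_n\in\{0,\dots,n-1\}$ denotes the remainder of $m$ upon division by $n$; for $a$ coprime to $n$, the symbol $a^{-1}$ inside $[\cdot]_n$ denotes a multiplicative inverse of $a$ modulo $n$. For $\{i,j,k\}=\{1,2,3\}$, $\mathcal S_k=\{M\in\mathbb N: Mn_k\in\langle n_i,n_j\rangle\}$ and $c_k=\min(\mathcal S_k\setminus\{0\})$ (the minimal relation for $n_k$). *)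

theory Defs
  imports Complex_Main "HOL-Number_Theory.Cong"
begin

definition gen2 :: "nat \<Rightarrow> nat \<Rightarrow> nat set" where
  "gen2 a b = {s * a + t * b | s t. True}"

definition minimal_gens3 :: "nat \<Rightarrow> nat \<Rightarrow> nat \<Rightarrow> bool" where
  "minimal_gens3 a b c \<longleftrightarrow> a \<notin> gen2 b c \<and> b \<notin> gen2 a c \<and> c \<notin> gen2 a b"

definition Sset :: "(nat \<Rightarrow> nat) \<Rightarrow> nat \<Rightarrow> nat \<Rightarrow> nat \<Rightarrow> nat set" where
  "Sset n i j k = {M. M * n k \<in> gen2 (n i) (n j)}"

definition cmin :: "(nat \<Rightarrow> nat) \<Rightarrow> nat \<Rightarrow> nat \<Rightarrow> nat \<Rightarrow> nat" where
  "cmin n i j k = (LEAST M. M \<in> Sset n i j k \<and> M \<noteq> 0)"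

text \<open>A multiplicative inverse of a modulo m (some choice; the results below only use it inside [.]_m).\<close>
definition modinv :: "int \<Rightarrow> int \<Rightarrow> int" where
  "modinv a m = (SOME x. [a * x = 1] (mod m))"

end

theory Submission
  imports Defs
begin

text \<open>Write \<open>a = n\<^sub>i\<close>, \<open>b = n\<^sub>j\<close>, \<open>c = n\<^sub>k\<close>. Because \<open>a \<notin> \<langle>b, c\<rangle>\<close>, the two residues
  \<open>r\<^sub>1 = [-a c\<^sup>-\<^sup>1]\<^sub>b\<close> and \<open>r\<^sub>2 = [a b\<^sup>-\<^sup>1]\<^sub>c\<close> are positive and satisfy the exact relation
  \<open>a + r\<^sub>1 c = r\<^sub>2 b\<close>. Put \<open>f \<alpha> = \<alpha> b - r\<^sub>1 q\<close> where \<open>\<alpha> c = q r\<^sub>2 + \<rho>\<close>; the relation gives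
  \<open>f \<alpha> \<cdot> c = q a + \<rho> b\<close>, so every \<open>f \<alpha>\<close> with \<open>\<alpha> \<ge> 1\<close> lies in \<open>S\<^sub>k\<close>, and conversely every
  \<open>M c = s a + t b\<close> with \<open>M > 0\<close> produces an \<open>\<alpha>\<close> with \<open>f \<alpha> \<le> M\<close>. Hence \<open>c\<^sub>k\<close> is the minimum of
  \<open>f\<close> over all \<open>\<alpha> \<ge> 1\<close>. This minimum is attained in \<open>1..I\<close>: from \<open>f \<alpha> \<cdot> r\<^sub>2 = \<alpha> a + r\<^sub>1 \<rho>\<close> one
  gets \<open>f \<alpha> > r\<^sub>1\<close> for \<open>\<alpha> > I\<close>, while \<open>f \<alpha> \<ge> f 1 + f (\<alpha> - 1) - r\<^sub>1\<close>.\<close>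

lemma modinv_cong:
  assumes "coprime x (m::int)"
  shows "[x * modinv x m = 1] (mod m)"
  unfolding modinv_def using cong_solve_coprime_int[OF assms] by (rule someI_ex)

lemma gen2_commute: "gen2 a b = gen2 b a"
  unfolding gen2_def by (auto; metis add.commute)

lemma gen2_memI:
  assumes "int a + r * int c = u * int b" "0 \<le> r" "r \<le> int b" "int c \<le> u"
  shows "a \<in> gen2 b c"
proof -
  have "int a = (u - int c) * int b + (int b - r) * int c"
    using assms(1) by (simp add: algebra_simps)
  also have "\<dots> = int (nat (u - int c) * b + nat (int b - r) * c)"
    using assms(2-4) by simp
  finally have "a = nat (u - int c) * b + nat (int b - r) * c"
    by (simp only: of_nat_eq_iff)
  thus ?thesis unfolding gen2_def by blast
qed

lemma zdiv_add_le:
  fixes x y r :: int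
  assumes "0 < r"
  shows "(x + y) div r \<le> x div r + y div r + 1"
proof -
  define z where "z = x mod r + y mod r"
  have "r * (z div r) \<le> z"
    using assms mult_div_mod_eq[of r z] pos_mod_sign[of r z] by linarith
  also have "z < r * 2"
    unfolding z_def using assms pos_mod_bound[of r x] pos_mod_bound[of r y] by linarith
  finally have "z div r < 2"
    using assms by (simp add: mult_less_cancel_left_pos)
  thus ?thesis unfolding z_def by (simp add: div_add1_eq[of x y r])
qed

lemma three_perm:
  assumes "{i, j, k} = {1, 2, 3 :: nat}"
  shows "(i, j, k) \<in> {(1, 2, 3), (1, 3, 2), (2, 1, 3), (2, 3, 1), (3, 1, 2), (3, 2, 1)}"
proof -
  have "i = 1 \<or> i = 2 \<or> i = 3" "j = 1 \<or> j = 2 \<or> j = 3" "k = 1 \<or> k = 2 \<or> k = 3"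
    using assms by blast+
  moreover have "card {i, j, k} = 3"
    using assms by simp
  ultimately show ?thesis
    by (elim disjE) (simp_all add: card_insert_if)
qed

lemma modinv_residues_relation:
  fixes a b c :: nat
  assumes pos: "0 < a" "0 < b" "0 < c"
    and cop: "coprime a b" "coprime b c"
    and not_gen: "a \<notin> gen2 b c"
  defines "r1 \<equiv> (- int a * modinv (int c) (int b)) mod int b"
    and "r2 \<equiv> (int a * modinv (int b) (int c)) mod int c"
  shows "int a + r1 * int c = r2 * int b" "0 < r1" "0 < r2"
proof -
  have r1_bounds: "0 \<le> r1" "r1 < int b" and r2_bounds: "0 \<le> r2" "r2 < int c"
    using pos unfolding r1_def r2_def by simp_all
  have inv_c: "[int c * modinv (int c) (int b) = 1] (mod int b)"
    and inv_b: "[int b * modinv (int b) (int c) = 1] (mod int c)"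
    using cop(2) by (simp_all add: modinv_cong coprime_commute)
  have "[r1 * int c + int a = - int a * modinv (int c) (int b) * int c + int a] (mod int b)"
    unfolding r1_def by (intro cong_add cong_mult cong_refl) simp
  also have "[- int a * modinv (int c) (int b) * int c + int a
      = - int a * (int c * modinv (int c) (int b)) + int a] (mod int b)"
    by (simp add: ac_simps)
  also have "[- int a * (int c * modinv (int c) (int b)) + int a = - int a * 1 + int a] (mod int b)"
    using inv_c by (intro cong_add cong_scalar_left cong_refl)
  finally have "int b dvd int a + r1 * int c"
    by (simp add: cong_0_iff add.commute)
  then obtain u where u: "int a + r1 * int c = u * int b"
    by (metis dvd_def mult.commute)
  have "0 < u * int b"
    using u pos r1_bounds by (metis add_pos_nonneg mult_nonneg_nonneg of_nat_0_le_iff of_nat_0_less_iff)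
  hence u_pos: "0 < u"
    using pos by (simp add: zero_less_mult_iff)
  have "[u * int b = int a] (mod int c)"
    unfolding u[symmetric] by (simp add: cong_def)
  also have "[int a = int a * (int b * modinv (int b) (int c))] (mod int c)"
    using cong_scalar_left[OF inv_b, of "int a"] by (simp add: cong_sym_eq)
  also have "[int a * (int b * modinv (int b) (int c)) = int a * modinv (int b) (int c) * int b] (mod int c)"
    by (simp add: ac_simps)
  also have "[int a * modinv (int b) (int c) * int b = r2 * int b] (mod int c)"
    unfolding r2_def by (intro cong_mult cong_refl) simp
  finally have "[u = r2] (mod int c)"
    using cop(2) by (simp add: cong_mult_rcancel coprime_commute)
  moreover have "u < int c"
    using gen2_memI[OF u] r1_bounds not_gen by fastforce
  ultimately have "u = r2"
    using u_pos r2_bounds by (simp add: cong_def)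
  thus "int a + r1 * int c = r2 * int b" "0 < r2"
    using u u_pos by simp_all
  show "0 < r1"
  proof (rule ccontr)
    assume "\<not> 0 < r1"
    hence "int b dvd int a" using u r1_bounds by simp
    hence "b = 1" using cop(1) coprime_absorb_right by auto
    hence "a = a * b + 0 * c" by simp
    thus False using not_gen unfolding gen2_def by blast
  qed
qed

locale relation_triple =
  fixes a b c :: nat and r1 r2 :: int
  assumes pos: "0 < a" "0 < b" "0 < c"
    and coprime_bc: "coprime b c"
    and relation: "int a + r1 * int c = r2 * int b"
    and r1_pos: "0 < r1" and r2_pos: "0 < r2"
begin

definition candidate :: "int \<Rightarrow> int" where
  "candidate \<alpha> = \<alpha> * int b - r1 * (\<alpha> * int c div r2)"

definition alpha_bound :: int where
  "alpha_bound = \<lceil>real_of_int r1 * real_of_int r2 / real a\<rceil>"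

lemma int_a_eq: "int a = r2 * int b - r1 * int c"
  using relation by simp

lemma candidate_mult_r2: "candidate \<alpha> * r2 = \<alpha> * int a + r1 * (\<alpha> * int c mod r2)"
proof -
  define q \<rho> where "q = \<alpha> * int c div r2" and "\<rho> = \<alpha> * int c mod r2"
  have "r2 * q = \<alpha> * int c - \<rho>"
    unfolding q_def \<rho>_def by (simp add: minus_mod_eq_mult_div)
  have "candidate \<alpha> * r2 = \<alpha> * (r2 * int b) - r1 * (r2 * q)"
    unfolding candidate_def q_def by (simp add: algebra_simps)
  also have "\<dots> = \<alpha> * (r2 * int b - r1 * int c) + r1 * \<rho>"
    unfolding \<open>r2 * q = \<alpha> * int c - \<rho>\<close> by (simp add: algebra_simps)
  finally show ?thesis unfolding \<rho>_def int_a_eq .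
qed

lemma candidate_mult_c:
  "candidate \<alpha> * int c = (\<alpha> * int c div r2) * int a + (\<alpha> * int c mod r2) * int b"
proof -
  define q \<rho> where "q = \<alpha> * int c div r2" and "\<rho> = \<alpha> * int c mod r2"
  have "\<alpha> * int c = r2 * q + \<rho>"
    unfolding q_def \<rho>_def by simp
  have "candidate \<alpha> * int c = (\<alpha> * int c) * int b - r1 * q * int c"
    unfolding candidate_def q_def by (simp add: algebra_simps)
  also have "\<dots> = q * (r2 * int b - r1 * int c) + \<rho> * int b"
    unfolding \<open>\<alpha> * int c = r2 * q + \<rho>\<close> by (simp add: algebra_simps)
  finally show ?thesis unfolding q_def \<rho>_def int_a_eq .
qed

lemma candidate_pos:
  assumes "0 < \<alpha>"
  shows "0 < candidate \<alpha>"
proof -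
  have "0 < candidate \<alpha> * r2"
    unfolding candidate_mult_r2 using assms pos r1_pos r2_pos by (simp add: add_pos_nonneg)
  thus ?thesis using r2_pos by (simp add: zero_less_mult_iff)
qed

lemma candidate_mem_gen2: "0 < \<alpha> \<Longrightarrow> nat (candidate \<alpha>) * c \<in> gen2 a b"
proof -
  assume "0 < \<alpha>"
  define q \<rho> where "q = \<alpha> * int c div r2" and "\<rho> = \<alpha> * int c mod r2"
  have "0 \<le> q" "0 \<le> \<rho>"
    unfolding q_def \<rho>_def using \<open>0 < \<alpha>\<close> r2_pos by (simp_all add: pos_imp_zdiv_nonneg_iff)
  hence "int (nat (candidate \<alpha>) * c) = int (nat q * a + nat \<rho> * b)"
    using candidate_mult_c[of \<alpha>] candidate_pos[OF \<open>0 < \<alpha>\<close>] unfolding q_def \<rho>_def by simp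
  thus ?thesis unfolding gen2_def of_nat_eq_iff by blast
qed

lemma exists_candidate_le:
  assumes "M * c \<in> gen2 a b" "M \<noteq> 0"
  shows "\<exists>\<alpha>>0. candidate \<alpha> \<le> int M"
proof -
  obtain s t where st: "M * c = s * a + t * b"
    using assms(1) unfolding gen2_def by blast
  have "int M * int c = int s * (r2 * int b - r1 * int c) + int t * int b"
    using arg_cong[OF st, of int] unfolding int_a_eq[symmetric] by simp
  hence st': "int c * (int M + int s * r1) = int b * (int s * r2 + int t)"
    by (simp add: algebra_simps)
  hence "int b dvd int c * (int M + int s * r1)"
    by simp
  hence "int b dvd int M + int s * r1"
    using coprime_bc by (simp add: coprime_dvd_mult_right_iff)
  then obtain \<alpha> where \<alpha>: "int M + int s * r1 = int b * \<alpha>"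
    by (rule dvdE)
  have "int b * (\<alpha> * int c) = int b * (int s * r2 + int t)"
    using st' \<alpha> by (simp add: ac_simps)
  hence "int s * r2 \<le> \<alpha> * int c"
    using pos by simp
  hence "int s \<le> \<alpha> * int c div r2"
    using r2_pos zdiv_mono1[of "int s * r2" "\<alpha> * int c" r2] by simp
  hence "r1 * int s \<le> r1 * (\<alpha> * int c div r2)"
    using r1_pos by simp
  hence "candidate \<alpha> \<le> int M"
    unfolding candidate_def using \<alpha> by (simp add: algebra_simps)
  have "0 < int b * \<alpha>"
    using \<alpha> assms(2) r1_pos by (simp add: add_pos_nonneg flip: \<alpha>)
  hence "0 < \<alpha>"
    using pos by (simp add: zero_less_mult_iff)
  with \<open>candidate \<alpha> \<le> int M\<close> show ?thesis by blast
qed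

lemma candidate_superadditive: "candidate \<alpha> + candidate \<beta> - r1 \<le> candidate (\<alpha> + \<beta>)"
proof -
  have "(\<alpha> + \<beta>) * int c div r2 \<le> \<alpha> * int c div r2 + \<beta> * int c div r2 + 1"
    using zdiv_add_le[OF r2_pos] by (simp add: distrib_right)
  hence "r1 * ((\<alpha> + \<beta>) * int c div r2) \<le> r1 * (\<alpha> * int c div r2 + \<beta> * int c div r2 + 1)"
    using r1_pos by simp
  thus ?thesis unfolding candidate_def by (simp add: algebra_simps)
qed

lemma one_le_alpha_bound: "1 \<le> alpha_bound"
  unfolding alpha_bound_def using pos r1_pos r2_pos by (simp add: one_le_ceiling)

lemma r1_less_candidate:
  assumes "alpha_bound < \<alpha>"
  shows "r1 < candidate \<alpha>"
proof -
  have "real_of_int r1 * real_of_int r2 / real a < real_of_int \<alpha>"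
    using assms unfolding alpha_bound_def by linarith
  hence "real_of_int (r1 * r2) < real_of_int (\<alpha> * int a)"
    using pos by (simp add: divide_less_eq)
  hence "r1 * r2 < \<alpha> * int a"
    by (simp only: of_int_less_iff)
  also have "\<dots> \<le> candidate \<alpha> * r2"
    unfolding candidate_mult_r2 using r1_pos r2_pos by simp
  finally show ?thesis using r2_pos by simp
qed

lemma exists_candidate_le_in_range:
  assumes "0 < \<alpha>"
  shows "\<exists>\<gamma>\<in>{1..alpha_bound}. candidate \<gamma> \<le> candidate \<alpha>"
proof (cases "\<alpha> \<le> alpha_bound")
  case True
  thus ?thesis using assms by force
next
  case False
  hence "r1 < candidate \<alpha>" "2 \<le> \<alpha>"
    using r1_less_candidate one_le_alpha_bound by auto
  show ?thesis
  proof (cases "r1 \<le> candidate (\<alpha> - 1)")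
    case True
    hence "candidate 1 \<le> candidate \<alpha>"
      using candidate_superadditive[of 1 "\<alpha> - 1"] by simp
    thus ?thesis using one_le_alpha_bound by force
  next
    case False
    hence "\<alpha> - 1 \<le> alpha_bound"
      using r1_less_candidate[of "\<alpha> - 1"] by (meson less_imp_le not_le)
    thus ?thesis
      using False \<open>r1 < candidate \<alpha>\<close> \<open>2 \<le> \<alpha>\<close> by (intro bexI[of _ "\<alpha> - 1"]) auto
  qed
qed

lemma Least_multiple_in_gen2_eq_Min_candidate:
  "int (LEAST M. M * c \<in> gen2 a b \<and> M \<noteq> 0) = Min (candidate ` {1..alpha_bound})"
  (is "int (Least ?P) = Min ?C")
proof -
  have P_candidate: "?P (nat (candidate \<gamma>))" if "0 < \<gamma>" for \<gamma>
    using candidate_mem_gen2[OF that] candidate_pos[OF that] by simp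
  have "finite ?C" "?C \<noteq> {}"
    using one_le_alpha_bound by auto
  then obtain \<gamma> where \<gamma>: "\<gamma> \<in> {1..alpha_bound}" "candidate \<gamma> = Min ?C"
    by (metis Min_in imageE)
  have "?P (Least ?P)"
    using P_candidate[of 1] by (rule LeastI) simp
  then obtain \<alpha> where "0 < \<alpha>" "candidate \<alpha> \<le> int (Least ?P)"
    using exists_candidate_le by blast
  then obtain \<delta> where "\<delta> \<in> {1..alpha_bound}" "candidate \<delta> \<le> int (Least ?P)"
    using exists_candidate_le_in_range by fastforce
  hence "Min ?C \<le> int (Least ?P)"
    using \<open>finite ?C\<close> by (meson Min_le image_eqI order_trans)
  moreover have "Least ?P \<le> nat (candidate \<gamma>)"
    using \<gamma>(1) by (intro Least_le P_candidate) simp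
  hence "int (Least ?P) \<le> candidate \<gamma>"
    using \<gamma>(1) candidate_pos[of \<gamma>] by simp
  hence "int (Least ?P) \<le> Min ?C"
    unfolding \<gamma>(2) .
  ultimately show ?thesis by simp
qed

end

theorem mainTheorem4:
  fixes n :: "nat \<Rightarrow> nat" and i j k :: nat
  assumes pos: "n 1 > 0" "n 2 > 0" "n 3 > 0"
    and cop: "coprime (n 1) (n 2)" "coprime (n 1) (n 3)" "coprime (n 2) (n 3)"
    and mingen: "minimal_gens3 (n 1) (n 2) (n 3)"
    and ijk: "{i, j, k} = {1, 2, 3}"
  shows
    "let r1 = (- int (n i) * modinv (int (n k)) (int (n j))) mod int (n j);
         r2 = (int (n i) * modinv (int (n j)) (int (n k))) mod int (n k);
         I = \<lceil>real_of_int r1 * real_of_int r2 / real (n i)\<rceil>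
     in int (cmin n i j k) =
        Min {\<alpha> * int (n j) - r1 * \<lfloor>real_of_int (\<alpha> * int (n k)) / real_of_int r2\<rfloor> | \<alpha>. \<alpha> \<in> {1..I}}"
proof -
  have hyps: "0 < n i" "0 < n j" "0 < n k" "coprime (n i) (n j)" "coprime (n j) (n k)"
      "n i \<notin> gen2 (n j) (n k)"
    using three_perm[OF ijk] pos cop mingen
    by (auto simp: minimal_gens3_def gen2_commute coprime_commute)
  define r1 r2 where "r1 = (- int (n i) * modinv (int (n k)) (int (n j))) mod int (n j)"
    and "r2 = (int (n i) * modinv (int (n j)) (int (n k))) mod int (n k)"
  interpret relation_triple "n i" "n j" "n k" r1 r2
    using hyps modinv_residues_relation[OF hyps] unfolding r1_def r2_def by unfold_locales auto
  have "{\<alpha> * int (n j) - r1 * \<lfloor>real_of_int (\<alpha> * int (n k)) / real_of_int r2\<rfloor> | \<alpha>.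
      \<alpha> \<in> {1..alpha_bound}} = candidate ` {1..alpha_bound}"
    unfolding candidate_def floor_divide_of_int_eq by blast
  thus ?thesis
    using Least_multiple_in_gen2_eq_Min_candidate
    unfolding Let_def cmin_def Sset_def mem_Collect_eq r1_def[symmetric] r2_def[symmetric]
      alpha_bound_def[symmetric] by simp
qed

end
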